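(* Let $(L,[\cdot,\cdot],\{\cdot,\cdot,\cdot\},\alpha)$ be a Hom-Lie-Yamaguti algebra over a field $\mathbb{K}$. If $HomH^2(L,L)\times HomH^3(L,L)=0$, then $(L,[\cdot,\cdot],\{\cdot,\cdot,\cdot\},\alpha)$ is analytically rigid.
   Context: A Hom-Lie-Yamaguti algebra (HLYA) over a commutative ring $R$ (here $R=\mathbb{K}$ a field or $R=\mathbb{K}[[t]]$) is a quadruple $(L,[\cdot,\cdot],\{\cdot,\cdot,\cdot\},\alpha)$ where $L$ is an $R$-module, $[\cdot,\cdot]$ is an $R$-bilinear and $\{\cdot,\cdot,\cdot\}$ an $R$-trilinear operation on $L$ (written $[xy]$, $\{xyz\}$), and $\alpha:L\to L$ is $R$-linear, such that for all $x,y,z,u,v\in L$: $\alpha([xy])=[\alpha(x)\alpha(y)]$; $\alpha(\{xyz\})=\{\alpha(x)\alpha(y)\alpha(z)\}$; $[xx]=0$; $\{xxy\}=0$; $\circlearrowleft_{x,y,z}([[xy]\alpha(z)]+\{xyz\})=0$; $\circlearrowleft_{x,y,z}\{[xy]\alpha(z)\alpha(u)\}=0$; $\{\alpha(x)\alpha(y)[uv]\}=[\{xyu\}\alpha^2(v)]+[\alpha^2(u)\{xyv\}]$; $\{\alpha^2(u)\alpha^2(v)\{xyz\}\}=\{\{uvx\}\alpha^2(y)\alpha^2(z)\}+\{\alpha^2(x)\{uvy\}\alpha^2(z)\}+\{\alpha^2(x)\alpha^2(y)\{uvz\}\}$, where $\circlearrowleft_{x,y,z}$ denotes the sum over cyclic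 permutations of $x,y,z$. Cochains: for $n\ge1$, $HomC^n(L,L)$ is the set of $\mathbb{K}$-multilinear maps $f:L^n\to L$ with $f(x_1,\dots,x_n)=0$ whenever $x_{2i-1}=x_{2i}$ for some $i$, and $f(\alpha(x_1),\dots,\alpha(x_n))=\alpha(f(x_1,\dots,x_n))$. For $h\in HomC^1(L,L)$ put $\delta_I^1h(x,y)=[xh(y)]+[h(x)y]-h([xy])$ and $\delta_{II}^1h(x,y,z)=\{h(x)yz\}+\{xh(y)z\}+\{xyh(z)\}-h(\{xyz\})$. For $(f,g)\in HomC^2(L,L)\times HomC^3(L,L)$ put $\delta_I^2(f,g)(x,y,z,u)=\{\alpha(x)\alpha(y)f(z,u)\}-f(\{xyz\},\alpha^2(u))-f(\alpha^2(z),\{xyu\})+g(\alpha(x),\alpha(y),[zu])-[\alpha^2(z)g(x,y,u)]-[g(x,y,z)\alpha^2(u)]$, $\delta_{II}^2 g(x,y,u,v,w)=\{\alpha^2(x)\alpha^2(y)g(u,v,w)\}-\{g(x,y,u)\alpha^2(v)\alpha^2(w)\}-\{\alpha^2(u)g(x,y,v)\alpha^2(w)\}-\{\alpha^2(u)\alpha^2(v)g(x,y,w)\}+g(\alpha^2(x),\alpha^2(y),\{uvw\})-g(\{xyu\},\alpha^2(v),\alpha^2(w))-g(\alpha^2(u),\{xyv\},\alpha^2(w))-g(\alpha^2(u),\alpha^2(v),\{xyw\})$, $d_I^2(f,g)(x,y,z)=\circlearrowleft_{x,y,z}([f(x,y)\alpha(z)]+f([xy],\alpha(z))+g(x,y,z))$,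 $d_{II}^2(f,g)(x,y,z,u)=\circlearrowleft_{x,y,z}(\{f(x,y)\alpha(z)\alpha(u)\}+g([xy],\alpha(z),\alpha(u)))$. Then $HomZ^2(L,L)\times HomZ^3(L,L)$ is the set of $(f,g)\in HomC^2\times HomC^3$ with $\delta_I^2(f,g)=0$, $\delta_{II}^2g=0$, $d_I^2(f,g)=0$, $d_{II}^2(f,g)=0$; $HomB^2(L,L)\times HomB^3(L,L)=\{(\delta_I^1h,\delta_{II}^1h): h\in HomC^1(L,L)\}$ (contained in the former); and $HomH^2(L,L)\times HomH^3(L,L)=(HomZ^2\times HomZ^3)/(HomB^2\times HomB^3)$. Deformations: $\mathbb{K}$-multilinear maps on $L$ are extended $\mathbb{K}[[t]]$-multilinearly to $L[[t]]$, and $\alpha$ is extended $\mathbb{K}[[t]]$-linearly. A one-parameter formal deformation of $(L,[\cdot,\cdot],\{\cdot,\cdot,\cdot\},\alpha)$ is a pair $f_t=\sum_{i\ge0}f_it^i$, $g_t=\sum_{i\ge0}g_it^i$ with $f_0=[\cdot,\cdot]$, $g_0=\{\cdot,\cdot,\cdot\}$, each $f_i$ $\mathbb{K}$-bilinear on $L$ and each $g_i$ $\mathbb{K}$-trilinear on $L$, such that $(L[[t]],f_t,g_t,\alpha)$ is an HLYA over $\mathbb{K}[[t]]$. Two deformations $(f_t,g_t)$, $(f_t',g_t')$ are equivalent if there is a $\mathbb{K}[[t]]$-linear isomorphism $\Phi_t=\sum_{i\ge0}\phi_it^i$ of $L[[t]]$ (each $\phi_i:L\to L$ $\mathbb{K}$-linear)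 with $\phi_0=\mathrm{id}_L$, $\Phi_t\circ\alpha=\alpha\circ\Phi_t$, $\Phi_t(f_t(x,y))=f_t'(\Phi_t(x),\Phi_t(y))$ and $\Phi_t(g_t(x,y,z))=g_t'(\Phi_t(x),\Phi_t(y),\Phi_t(z))$. A deformation is trivial if it is equivalent to the null deformation $(f_0,g_0)$ (i.e. $f_i=0$, $g_i=0$ for all $i\ge1$). The HLYA is analytically rigid if every one-parameter formal deformation of it is trivial. *)

theory Defs
  imports Main "HOL-Computational_Algebra.Formal_Power_Series"
begin

definition lin :: "('r \<Rightarrow> 'm \<Rightarrow> 'm) \<Rightarrow> ('m::ab_group_add \<Rightarrow> 'm) \<Rightarrow> bool" where
  "lin s h \<longleftrightarrow> (\<forall>x y. h (x + y) = h x + h y) \<and> (\<forall>c x. h (s c x) = s c (h x))"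

definition bilin :: "('r \<Rightarrow> 'm \<Rightarrow> 'm) \<Rightarrow> ('m::ab_group_add \<Rightarrow> 'm \<Rightarrow> 'm) \<Rightarrow> bool" where
  "bilin s f \<longleftrightarrow> (\<forall>y. lin s (\<lambda>x. f x y)) \<and> (\<forall>x. lin s (\<lambda>y. f x y))"

definition trilin :: "('r \<Rightarrow> 'm \<Rightarrow> 'm) \<Rightarrow> ('m::ab_group_add \<Rightarrow> 'm \<Rightarrow> 'm \<Rightarrow> 'm) \<Rightarrow> bool" where
  "trilin s g \<longleftrightarrow> (\<forall>y z. lin s (\<lambda>x. g x y z)) \<and> (\<forall>x z. lin s (\<lambda>y. g x y z))
                 \<and> (\<forall>x y. lin s (\<lambda>z. g x y z))"

section \<open>Hom-Lie-Yamaguti algebras over a commutative ring R (module given by scalar action s)\<close>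

definition hlya :: "('r::comm_ring_1 \<Rightarrow> 'm \<Rightarrow> 'm) \<Rightarrow> ('m::ab_group_add \<Rightarrow> 'm \<Rightarrow> 'm)
     \<Rightarrow> ('m \<Rightarrow> 'm \<Rightarrow> 'm \<Rightarrow> 'm) \<Rightarrow> ('m \<Rightarrow> 'm) \<Rightarrow> bool" where
  "hlya s b T a \<longleftrightarrow> module s \<and> bilin s b \<and> trilin s T \<and> lin s a \<and>
    (\<forall>x y. a (b x y) = b (a x) (a y)) \<and>
    (\<forall>x y z. a (T x y z) = T (a x) (a y) (a z)) \<and>
    (\<forall>x. b x x = 0) \<and>
    (\<forall>x y. T x x y = 0) \<and>
    (\<forall>x y z. (b (b x y) (a z) + T x y z) + (b (b y z) (a x) + T y z x)
               + (b (b z x) (a y) + T z x y) = 0) \<and>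
    (\<forall>x y z u. T (b x y) (a z) (a u) + T (b y z) (a x) (a u) + T (b z x) (a y) (a u) = 0) \<and>
    (\<forall>x y u v. T (a x) (a y) (b u v) = b (T x y u) (a (a v)) + b (a (a u)) (T x y v)) \<and>
    (\<forall>x y z u v. T (a (a u)) (a (a v)) (T x y z)
        = T (T u v x) (a (a y)) (a (a z)) + T (a (a x)) (T u v y) (a (a z))
          + T (a (a x)) (a (a y)) (T u v z))"

definition HomC1 :: "('k \<Rightarrow> 'v \<Rightarrow> 'v) \<Rightarrow> ('v \<Rightarrow> 'v) \<Rightarrow> ('v::ab_group_add \<Rightarrow> 'v) \<Rightarrow> bool" where
  "HomC1 s a h \<longleftrightarrow> lin s h \<and> (\<forall>x. h (a x) = a (h x))"

definition HomC2 :: "('k \<Rightarrow> 'v \<Rightarrow> 'v) \<Rightarrow> ('v \<Rightarrow> 'v) \<Rightarrow> ('v::ab_group_add \<Rightarrow> 'v \<Rightarrow> 'v) \<Rightarrow> bool" where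
  "HomC2 s a f \<longleftrightarrow> bilin s f \<and> (\<forall>x. f x x = 0) \<and> (\<forall>x y. f (a x) (a y) = a (f x y))"

definition HomC3 :: "('k \<Rightarrow> 'v \<Rightarrow> 'v) \<Rightarrow> ('v \<Rightarrow> 'v) \<Rightarrow> ('v::ab_group_add \<Rightarrow> 'v \<Rightarrow> 'v \<Rightarrow> 'v) \<Rightarrow> bool" where
  "HomC3 s a g \<longleftrightarrow> trilin s g \<and> (\<forall>x z. g x x z = 0) \<and>
     (\<forall>x y z. g (a x) (a y) (a z) = a (g x y z))"

definition deltaI1 :: "('v::ab_group_add \<Rightarrow> 'v \<Rightarrow> 'v) \<Rightarrow> ('v \<Rightarrow> 'v) \<Rightarrow> 'v \<Rightarrow> 'v \<Rightarrow> 'v" where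
  "deltaI1 b h x y = b x (h y) + b (h x) y - h (b x y)"

definition deltaII1 :: "('v::ab_group_add \<Rightarrow> 'v \<Rightarrow> 'v \<Rightarrow> 'v) \<Rightarrow> ('v \<Rightarrow> 'v) \<Rightarrow> 'v \<Rightarrow> 'v \<Rightarrow> 'v \<Rightarrow> 'v" where
  "deltaII1 T h x y z = T (h x) y z + T x (h y) z + T x y (h z) - h (T x y z)"

definition deltaI2 :: "('v::ab_group_add \<Rightarrow> 'v \<Rightarrow> 'v) \<Rightarrow> ('v \<Rightarrow> 'v \<Rightarrow> 'v \<Rightarrow> 'v) \<Rightarrow> ('v \<Rightarrow> 'v)
     \<Rightarrow> ('v \<Rightarrow> 'v \<Rightarrow> 'v) \<Rightarrow> ('v \<Rightarrow> 'v \<Rightarrow> 'v \<Rightarrow> 'v) \<Rightarrow> 'v \<Rightarrow> 'v \<Rightarrow> 'v \<Rightarrow> 'v \<Rightarrow> 'v" where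
  "deltaI2 b T a f g x y z u =
     T (a x) (a y) (f z u) - f (T x y z) (a (a u)) - f (a (a z)) (T x y u)
     + g (a x) (a y) (b z u) - b (a (a z)) (g x y u) - b (g x y z) (a (a u))"

definition deltaII2 :: "('v::ab_group_add \<Rightarrow> 'v \<Rightarrow> 'v \<Rightarrow> 'v) \<Rightarrow> ('v \<Rightarrow> 'v)
     \<Rightarrow> ('v \<Rightarrow> 'v \<Rightarrow> 'v \<Rightarrow> 'v) \<Rightarrow> 'v \<Rightarrow> 'v \<Rightarrow> 'v \<Rightarrow> 'v \<Rightarrow> 'v \<Rightarrow> 'v" where
  "deltaII2 T a g x y u v w =
     T (a (a x)) (a (a y)) (g u v w) - T (g x y u) (a (a v)) (a (a w))
     - T (a (a u)) (g x y v) (a (a w)) - T (a (a u)) (a (a v)) (g x y w)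
     + g (a (a x)) (a (a y)) (T u v w) - g (T x y u) (a (a v)) (a (a w))
     - g (a (a u)) (T x y v) (a (a w)) - g (a (a u)) (a (a v)) (T x y w)"

definition dI2 :: "('v::ab_group_add \<Rightarrow> 'v \<Rightarrow> 'v) \<Rightarrow> ('v \<Rightarrow> 'v)
     \<Rightarrow> ('v \<Rightarrow> 'v \<Rightarrow> 'v) \<Rightarrow> ('v \<Rightarrow> 'v \<Rightarrow> 'v \<Rightarrow> 'v) \<Rightarrow> 'v \<Rightarrow> 'v \<Rightarrow> 'v \<Rightarrow> 'v" where
  "dI2 b a f g x y z =
     (b (f x y) (a z) + f (b x y) (a z) + g x y z)
   + (b (f y z) (a x) + f (b y z) (a x) + g y z x)
   + (b (f z x) (a y) + f (b z x) (a y) + g z x y)"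

definition dII2 :: "('v::ab_group_add \<Rightarrow> 'v \<Rightarrow> 'v) \<Rightarrow> ('v \<Rightarrow> 'v \<Rightarrow> 'v \<Rightarrow> 'v) \<Rightarrow> ('v \<Rightarrow> 'v)
     \<Rightarrow> ('v \<Rightarrow> 'v \<Rightarrow> 'v) \<Rightarrow> ('v \<Rightarrow> 'v \<Rightarrow> 'v \<Rightarrow> 'v) \<Rightarrow> 'v \<Rightarrow> 'v \<Rightarrow> 'v \<Rightarrow> 'v \<Rightarrow> 'v" where
  "dII2 b T a f g x y z u =
     (T (f x y) (a z) (a u) + g (b x y) (a z) (a u))
   + (T (f y z) (a x) (a u) + g (b y z) (a x) (a u))
   + (T (f z x) (a y) (a u) + g (b z x) (a y) (a u))"

definition HomZ23 :: "('k \<Rightarrow> 'v \<Rightarrow> 'v) \<Rightarrow> ('v::ab_group_add \<Rightarrow> 'v \<Rightarrow> 'v) \<Rightarrow> ('v \<Rightarrow> 'v \<Rightarrow> 'v \<Rightarrow> 'v)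
     \<Rightarrow> ('v \<Rightarrow> 'v) \<Rightarrow> ('v \<Rightarrow> 'v \<Rightarrow> 'v) \<Rightarrow> ('v \<Rightarrow> 'v \<Rightarrow> 'v \<Rightarrow> 'v) \<Rightarrow> bool" where
  "HomZ23 s b T a f g \<longleftrightarrow> HomC2 s a f \<and> HomC3 s a g \<and>
     (\<forall>x y z u. deltaI2 b T a f g x y z u = 0) \<and>
     (\<forall>x y u v w. deltaII2 T a g x y u v w = 0) \<and>
     (\<forall>x y z. dI2 b a f g x y z = 0) \<and>
     (\<forall>x y z u. dII2 b T a f g x y z u = 0)"

definition HomB23 :: "('k \<Rightarrow> 'v \<Rightarrow> 'v) \<Rightarrow> ('v::ab_group_add \<Rightarrow> 'v \<Rightarrow> 'v) \<Rightarrow> ('v \<Rightarrow> 'v \<Rightarrow> 'v \<Rightarrow> 'v)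
     \<Rightarrow> ('v \<Rightarrow> 'v) \<Rightarrow> ('v \<Rightarrow> 'v \<Rightarrow> 'v) \<Rightarrow> ('v \<Rightarrow> 'v \<Rightarrow> 'v \<Rightarrow> 'v) \<Rightarrow> bool" where
  "HomB23 s b T a f g \<longleftrightarrow> (\<exists>h. HomC1 s a h \<and> f = deltaI1 b h \<and> g = deltaII1 T h)"

definition HomH23_zero :: "('k \<Rightarrow> 'v \<Rightarrow> 'v) \<Rightarrow> ('v::ab_group_add \<Rightarrow> 'v \<Rightarrow> 'v)
     \<Rightarrow> ('v \<Rightarrow> 'v \<Rightarrow> 'v \<Rightarrow> 'v) \<Rightarrow> ('v \<Rightarrow> 'v) \<Rightarrow> bool" where
  "HomH23_zero s b T a \<longleftrightarrow> (\<forall>f g. HomZ23 s b T a f g \<longrightarrow> HomB23 s b T a f g)"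

section \<open>L[[t]] (as 'v fps) and the K[[t]]-multilinear extensions\<close>

definition fps_scale :: "('k \<Rightarrow> 'v \<Rightarrow> 'v) \<Rightarrow> 'k fps \<Rightarrow> 'v::comm_monoid_add fps \<Rightarrow> 'v fps" where
  "fps_scale s c x = Abs_fps (\<lambda>n. \<Sum>i\<le>n. s (fps_nth c (i)) (fps_nth x ((n - i))))"

definition ext_map :: "('v \<Rightarrow> 'v) \<Rightarrow> 'v fps \<Rightarrow> 'v fps" where
  "ext_map a x = Abs_fps (\<lambda>n. a (fps_nth x (n)))"

definition ext1 :: "(nat \<Rightarrow> 'v \<Rightarrow> 'v) \<Rightarrow> 'v::comm_monoid_add fps \<Rightarrow> 'v fps" where
  "ext1 P x = Abs_fps (\<lambda>n. \<Sum>i\<le>n. P i (fps_nth x ((n - i))))"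

definition ext2 :: "(nat \<Rightarrow> 'v \<Rightarrow> 'v \<Rightarrow> 'v) \<Rightarrow> 'v::comm_monoid_add fps \<Rightarrow> 'v fps \<Rightarrow> 'v fps" where
  "ext2 F x y = Abs_fps (\<lambda>n. \<Sum>i\<le>n. \<Sum>j\<le>n - i. F i (fps_nth x (j)) (fps_nth y ((n - i - j))))"

definition ext3 :: "(nat \<Rightarrow> 'v \<Rightarrow> 'v \<Rightarrow> 'v \<Rightarrow> 'v) \<Rightarrow> 'v::comm_monoid_add fps \<Rightarrow> 'v fps \<Rightarrow> 'v fps \<Rightarrow> 'v fps" where
  "ext3 G x y z = Abs_fps (\<lambda>n. \<Sum>i\<le>n. \<Sum>j\<le>n - i. \<Sum>k\<le>n - i - j.
       G i (fps_nth x (j)) (fps_nth y (k)) (fps_nth z ((n - i - j - k))))"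

definition deformation :: "('k::field \<Rightarrow> 'v \<Rightarrow> 'v) \<Rightarrow> ('v::ab_group_add \<Rightarrow> 'v \<Rightarrow> 'v)
     \<Rightarrow> ('v \<Rightarrow> 'v \<Rightarrow> 'v \<Rightarrow> 'v) \<Rightarrow> ('v \<Rightarrow> 'v)
     \<Rightarrow> (nat \<Rightarrow> 'v \<Rightarrow> 'v \<Rightarrow> 'v) \<Rightarrow> (nat \<Rightarrow> 'v \<Rightarrow> 'v \<Rightarrow> 'v \<Rightarrow> 'v) \<Rightarrow> bool" where
  "deformation s b T a F G \<longleftrightarrow> F 0 = b \<and> G 0 = T \<and>
     (\<forall>i. bilin s (F i)) \<and> (\<forall>i. trilin s (G i)) \<and>
     hlya (fps_scale s) (ext2 F) (ext3 G) (ext_map a)"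

definition equivalent_deformations :: "('k::field \<Rightarrow> 'v \<Rightarrow> 'v) \<Rightarrow> ('v::ab_group_add \<Rightarrow> 'v)
     \<Rightarrow> (nat \<Rightarrow> 'v \<Rightarrow> 'v \<Rightarrow> 'v) \<Rightarrow> (nat \<Rightarrow> 'v \<Rightarrow> 'v \<Rightarrow> 'v \<Rightarrow> 'v)
     \<Rightarrow> (nat \<Rightarrow> 'v \<Rightarrow> 'v \<Rightarrow> 'v) \<Rightarrow> (nat \<Rightarrow> 'v \<Rightarrow> 'v \<Rightarrow> 'v \<Rightarrow> 'v) \<Rightarrow> bool" where
  "equivalent_deformations s a F G F' G' \<longleftrightarrow>
     (\<exists>P. P 0 = id \<and> (\<forall>i. lin s (P i)) \<and>
        lin (fps_scale s) (ext1 P) \<and> bij (ext1 P) \<and>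
        ext1 P \<circ> ext_map a = ext_map a \<circ> ext1 P \<and>
        (\<forall>x y. ext1 P (ext2 F x y) = ext2 F' (ext1 P x) (ext1 P y)) \<and>
        (\<forall>x y z. ext1 P (ext3 G x y z) = ext3 G' (ext1 P x) (ext1 P y) (ext1 P z)))"

definition null_br :: "('v::zero \<Rightarrow> 'v \<Rightarrow> 'v) \<Rightarrow> nat \<Rightarrow> 'v \<Rightarrow> 'v \<Rightarrow> 'v" where
  "null_br b i = (if i = 0 then b else (\<lambda>x y. 0))"

definition null_tr :: "('v::zero \<Rightarrow> 'v \<Rightarrow> 'v \<Rightarrow> 'v) \<Rightarrow> nat \<Rightarrow> 'v \<Rightarrow> 'v \<Rightarrow> 'v \<Rightarrow> 'v" where
  "null_tr T i = (if i = 0 then T else (\<lambda>x y z. 0))"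

definition analytically_rigid :: "('k::field \<Rightarrow> 'v \<Rightarrow> 'v) \<Rightarrow> ('v::ab_group_add \<Rightarrow> 'v \<Rightarrow> 'v)
     \<Rightarrow> ('v \<Rightarrow> 'v \<Rightarrow> 'v \<Rightarrow> 'v) \<Rightarrow> ('v \<Rightarrow> 'v) \<Rightarrow> bool" where
  "analytically_rigid s b T a \<longleftrightarrow>
     (\<forall>F G. deformation s b T a F G \<longrightarrow>
        equivalent_deformations s a F G (null_br b) (null_tr T))"

end

theory Submission
  imports Defs
begin

text \<open>A deformation is normalized one order at a time. If \<open>(F, G)\<close> vanishes in the orders
  \<open>1..n\<close>, the coefficients of \<open>t^(n+1)\<close> of the Hom-Lie-Yamaguti identities for the extended
  operations say that \<open>(F (n+1), G (n+1))\<close> is a cocycle. By hypothesis it is the coboundary of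
  some \<open>h\<close> commuting with \<open>\<alpha>\<close>, and conjugating by the gauge \<open>1 + t^(n+1) h\<close> gives an
  equivalent deformation vanishing in the orders \<open>1..n+1\<close>. The composites of these gauges
  stabilise coefficientwise, and their limit conjugates the deformation into the null one.
  Conjugated operations are again deformations because every \<open>\<bbbK>[[t]]\<close>-multilinear map
  on \<open>L[[t]]\<close> is the extension of its coefficient maps on constants.\<close>

unbundle fps_syntax

lemma sum_atMost_eq_first:
  assumes "\<And>j. 0 < j \<Longrightarrow> j \<le> k \<Longrightarrow> g j = 0"
  shows "(\<Sum>j\<le>(k::nat). g j) = (g 0 :: 'a::comm_monoid_add)"
  using sum.mono_neutral_right[of "{..k}" "{0}" g] assms by auto

lemma sum_atMost_eq_last:
  assumes "\<And>j. j < k \<Longrightarrow> g j = 0"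
  shows "(\<Sum>j\<le>(k::nat). g j) = (g k :: 'a::comm_monoid_add)"
  using sum.mono_neutral_right[of "{..k}" "{k}" g] assms by auto

lemma sum_atMost_eq_first_last:
  assumes "\<And>j. 0 < j \<Longrightarrow> j < k \<Longrightarrow> g j = 0" and "0 < k"
  shows "(\<Sum>j\<le>(k::nat). g j) = (g 0 + g k :: 'a::comm_monoid_add)"
  using sum.mono_neutral_right[of "{..k}" "{0,k}" g] assms by auto

definition triples :: "nat \<Rightarrow> (nat \<times> nat \<times> nat) set" where
  "triples m = {(i,j,k). i + j + k = m}"

definition quadruples :: "nat \<Rightarrow> (nat \<times> nat \<times> nat \<times> nat) set" where
  "quadruples m = {(i,j,k,l). i + j + k + l = m}"

lemma finite_triples: "finite (triples m)"
  by (rule finite_subset[of _ "{..m} \<times> {..m} \<times> {..m}"]) (auto simp: triples_def)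

lemma finite_quadruples: "finite (quadruples m)"
  by (rule finite_subset[of _ "{..m} \<times> {..m} \<times> {..m} \<times> {..m}"]) (auto simp: quadruples_def)

lemma sum_nested_eq_triples:
  "(\<Sum>i\<le>m. \<Sum>j\<le>m - i. f i j (m - i - j)) = (\<Sum>(i,j,k)\<in>triples m. (f i j k :: 'a::comm_monoid_add))"
proof -
  have "(\<Sum>i\<le>m. \<Sum>j\<le>m - i. f i j (m - i - j)) = (\<Sum>(i,j)\<in>Sigma {..m} (\<lambda>i. {..m-i}). f i j (m - i - j))"
    by (rule sum.Sigma) auto
  also have "\<dots> = (\<Sum>(i,j,k)\<in>triples m. f i j k)"
    by (rule sum.reindex_bij_witness[where i="\<lambda>(i,j,k). (i,j)" and j="\<lambda>(i,j). (i,j,m-i-j)"])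
       (auto simp: triples_def)
  finally show ?thesis .
qed

lemma sum_nested_eq_triples':
  "(\<Sum>k\<le>m. \<Sum>i\<le>k. f i (k - i) (m - k)) = (\<Sum>(i,j,k)\<in>triples m. (f i j k :: 'a::comm_monoid_add))"
proof -
  have "(\<Sum>k\<le>m. \<Sum>i\<le>k. f i (k - i) (m - k)) = (\<Sum>(k,i)\<in>Sigma {..m} (\<lambda>k. {..k}). f i (k - i) (m - k))"
    by (rule sum.Sigma) auto
  also have "\<dots> = (\<Sum>(i,j,k)\<in>triples m. f i j k)"
    by (rule sum.reindex_bij_witness[where i="\<lambda>(i,j,k). (i+j,i)" and j="\<lambda>(k,i). (i,k-i,m-k)"])
       (auto simp: triples_def)
  finally show ?thesis .
qed

lemma sum_nested_eq_quadruples: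
  "(\<Sum>i\<le>m. \<Sum>j\<le>m - i. \<Sum>k\<le>m - i - j. f i j k (m - i - j - k))
     = (\<Sum>(i,j,k,l)\<in>quadruples m. (f i j k l :: 'a::comm_monoid_add))"
proof -
  have "(\<Sum>i\<le>m. \<Sum>j\<le>m - i. \<Sum>k\<le>m - i - j. f i j k (m - i - j - k))
     = (\<Sum>(i,j,k)\<in>Sigma {..m} (\<lambda>i. Sigma {..m-i} (\<lambda>j. {..m-i-j})). f i j k (m - i - j - k))"
    by (simp add: sum.Sigma case_prod_beta)
  also have "\<dots> = (\<Sum>(i,j,k,l)\<in>quadruples m. f i j k l)"
    by (rule sum.reindex_bij_witness[where i="\<lambda>(i,j,k,l). (i,j,k)" and j="\<lambda>(i,j,k). (i,j,k,m-i-j-k)"])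
       (auto simp: quadruples_def)
  finally show ?thesis .
qed

lemma sum_triples_swap:
  "(\<Sum>(i,j,k)\<in>triples m. f i j k) = (\<Sum>(i,j,k)\<in>triples m. (f j i k :: 'a::comm_monoid_add))"
  by (rule sum.reindex_bij_witness[where i="\<lambda>(i,j,k). (j,i,k)" and j="\<lambda>(i,j,k). (j,i,k)"])
     (auto simp: triples_def)

lemma sum_triples_rotate:
  "(\<Sum>(i,j,k)\<in>triples m. f i j k) = (\<Sum>(i,j,k)\<in>triples m. (f j k i :: 'a::comm_monoid_add))"
  by (rule sum.reindex_bij_witness[where i="\<lambda>(i,j,k). (j,k,i)" and j="\<lambda>(i,j,k). (k,i,j)"])
     (auto simp: triples_def)

lemma sum_quadruples_rotate:
  "(\<Sum>(i,j,k,l)\<in>quadruples m. f i j k l) = (\<Sum>(i,j,k,l)\<in>quadruples m. (f j k l i :: 'a::comm_monoid_add))"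
  by (rule sum.reindex_bij_witness[where i="\<lambda>(i,j,k,l). (j,k,l,i)" and j="\<lambda>(i,j,k,l). (l,i,j,k)"])
     (auto simp: quadruples_def)

lemma sum_triples_sparse:
  assumes "\<And>i j k. i + j + k = m \<Longrightarrow> (0 < i \<and> i \<le> n) \<or> (0 < j \<and> j \<le> n) \<or> (0 < k \<and> k \<le> n)
             \<Longrightarrow> f i j k = (0::'a::comm_monoid_add)"
  shows sum_triples_sparse_low: "m \<le> n \<Longrightarrow> (\<Sum>(i,j,k)\<in>triples m. f i j k) = (if m = 0 then f 0 0 0 else 0)"
    and sum_triples_sparse_next: "m = Suc n \<Longrightarrow> (\<Sum>(i,j,k)\<in>triples m. f i j k)
          = f (Suc n) 0 0 + f 0 (Suc n) 0 + f 0 0 (Suc n)"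
proof -
  assume "m \<le> n"
  then have "(\<Sum>(i,j,k)\<in>triples m. f i j k) = (\<Sum>(i,j,k)\<in>(if m = 0 then {(0,0,0)} else {}). f i j k)"
    by (intro sum.mono_neutral_right finite_triples)
       (auto simp: triples_def intro!: assms split: if_splits)
  then show "(\<Sum>(i,j,k)\<in>triples m. f i j k) = (if m = 0 then f 0 0 0 else 0)"
    by simp
next
  assume m: "m = Suc n"
  let ?S = "{(Suc n,0,0),(0,Suc n,0),(0,0,Suc n)}"
  have "(\<Sum>(i,j,k)\<in>triples m. f i j k) = (\<Sum>(i,j,k)\<in>?S. f i j k)"
  proof (rule sum.mono_neutral_right[OF finite_triples])
    show "?S \<subseteq> triples m" using m by (auto simp: triples_def)
    show "\<forall>x\<in>triples m - ?S. (case x of (i,j,k) \<Rightarrow> f i j k) = 0"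
    proof
      fix x assume x: "x \<in> triples m - ?S"
      obtain i j k where ijk: "x = (i,j,k)" by (cases x)
      have "(0 < i \<and> i \<le> n) \<or> (0 < j \<and> j \<le> n) \<or> (0 < k \<and> k \<le> n)"
        using x m unfolding ijk triples_def by (cases "i=0"; cases "j=0"; simp; linarith)
      then show "(case x of (i,j,k) \<Rightarrow> f i j k) = 0"
        using x assms unfolding ijk triples_def by simp
    qed
  qed
  then show "(\<Sum>(i,j,k)\<in>triples m. f i j k) = f (Suc n) 0 0 + f 0 (Suc n) 0 + f 0 0 (Suc n)"
    by (simp add: add.assoc)
qed

lemma sum_quadruples_sparse:
  assumes "\<And>i j k l. i + j + k + l = m \<Longrightarrow> (0 < i \<and> i \<le> n) \<or> (0 < j \<and> j \<le> n) \<or> (0 < k \<and> k \<le> n)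
             \<or> (0 < l \<and> l \<le> n) \<Longrightarrow> f i j k l = (0::'a::comm_monoid_add)"
  shows sum_quadruples_sparse_low: "m \<le> n \<Longrightarrow>
          (\<Sum>(i,j,k,l)\<in>quadruples m. f i j k l) = (if m = 0 then f 0 0 0 0 else 0)"
    and sum_quadruples_sparse_next: "m = Suc n \<Longrightarrow> (\<Sum>(i,j,k,l)\<in>quadruples m. f i j k l)
          = f (Suc n) 0 0 0 + f 0 (Suc n) 0 0 + f 0 0 (Suc n) 0 + f 0 0 0 (Suc n)"
proof -
  assume "m \<le> n"
  then have "(\<Sum>(i,j,k,l)\<in>quadruples m. f i j k l)
      = (\<Sum>(i,j,k,l)\<in>(if m = 0 then {(0,0,0,0)} else {}). f i j k l)"
    by (intro sum.mono_neutral_right finite_quadruples)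
       (auto simp: quadruples_def intro!: assms split: if_splits)
  then show "(\<Sum>(i,j,k,l)\<in>quadruples m. f i j k l) = (if m = 0 then f 0 0 0 0 else 0)"
    by simp
next
  assume m: "m = Suc n"
  let ?S = "{(Suc n,0,0,0),(0,Suc n,0,0),(0,0,Suc n,0),(0,0,0,Suc n)}"
  have "(\<Sum>(i,j,k,l)\<in>quadruples m. f i j k l) = (\<Sum>(i,j,k,l)\<in>?S. f i j k l)"
  proof (rule sum.mono_neutral_right[OF finite_quadruples])
    show "?S \<subseteq> quadruples m" using m by (auto simp: quadruples_def)
    show "\<forall>x\<in>quadruples m - ?S. (case x of (i,j,k,l) \<Rightarrow> f i j k l) = 0"
    proof
      fix x assume x: "x \<in> quadruples m - ?S"
      obtain i j k l where ijkl: "x = (i,j,k,l)" by (cases x)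
      have "(0 < i \<and> i \<le> n) \<or> (0 < j \<and> j \<le> n) \<or> (0 < k \<and> k \<le> n) \<or> (0 < l \<and> l \<le> n)"
        using x m unfolding ijkl quadruples_def by (cases "i=0"; cases "j=0"; cases "k=0"; simp; linarith)
      then show "(case x of (i,j,k,l) \<Rightarrow> f i j k l) = 0"
        using x assms unfolding ijkl quadruples_def by simp
    qed
  qed
  then show "(\<Sum>(i,j,k,l)\<in>quadruples m. f i j k l)
      = f (Suc n) 0 0 0 + f 0 (Suc n) 0 0 + f 0 0 (Suc n) 0 + f 0 0 0 (Suc n)"
    by (simp add: add.assoc)
qed

lemma lin_add: "lin s h \<Longrightarrow> h (x + y) = h x + h y" by (simp add: lin_def)
lemma lin_scale: "lin s h \<Longrightarrow> h (s c x) = s c (h x)" by (simp add: lin_def)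
lemma lin_zero: "lin s h \<Longrightarrow> h 0 = 0"
  using lin_add[of s h 0 0] by simp
lemma lin_minus: "lin s h \<Longrightarrow> h (- x) = - h x"
  using lin_add[of s h x "- x"] lin_zero[of s h] by (simp add: eq_neg_iff_add_eq_0 add.commute)
lemma lin_sum: "lin s h \<Longrightarrow> h (sum g A) = (\<Sum>x\<in>A. h (g x))"
  using sum_comp_morphism[of h g A] by (simp add: lin_zero lin_add comp_def)

lemma bilin_lin1: "bilin s f \<Longrightarrow> lin s (\<lambda>x. f x y)" by (simp add: bilin_def)
lemma bilin_lin2: "bilin s f \<Longrightarrow> lin s (\<lambda>y. f x y)" by (simp add: bilin_def)
lemma trilin_lin1: "trilin s f \<Longrightarrow> lin s (\<lambda>x. f x y z)" by (simp add: trilin_def)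
lemma trilin_lin2: "trilin s f \<Longrightarrow> lin s (\<lambda>y. f x y z)" by (simp add: trilin_def)
lemma trilin_lin3: "trilin s f \<Longrightarrow> lin s (\<lambda>z. f x y z)" by (simp add: trilin_def)

lemma bilin_zero:
  assumes "bilin s f" shows bilin_zero1: "f 0 y = 0" and bilin_zero2: "f x 0 = 0"
  using lin_zero[OF bilin_lin1[OF assms]] lin_zero[OF bilin_lin2[OF assms]] by auto

lemma trilin_zero:
  assumes "trilin s f" shows trilin_zero1: "f 0 y z = 0" and trilin_zero2: "f x 0 z = 0"
    and trilin_zero3: "f x y 0 = 0"
  using lin_zero[OF trilin_lin1[OF assms]] lin_zero[OF trilin_lin2[OF assms]]
    lin_zero[OF trilin_lin3[OF assms]] by auto

lemma hlyaD:
  assumes "hlya s b T a"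
  shows hlya_module: "module s" and hlya_bilin: "bilin s b" and hlya_trilin: "trilin s T"
    and hlya_lin: "lin s a"
    and hlya_twist_bracket: "a (b x y) = b (a x) (a y)"
    and hlya_twist_triple: "a (T x y z) = T (a x) (a y) (a z)"
    and hlya_bracket_alt: "b x x = 0"
    and hlya_triple_alt: "T x x y = 0"
    and hlya_jacobi: "(b (b x y) (a z) + T x y z) + (b (b y z) (a x) + T y z x)
               + (b (b z x) (a y) + T z x y) = 0"
    and hlya_triple_cyclic: "T (b x y) (a z) (a u) + T (b y z) (a x) (a u) + T (b z x) (a y) (a u) = 0"
    and hlya_triple_bracket: "T (a x) (a y) (b u v) = b (T x y u) (a (a v)) + b (a (a u)) (T x y v)"
    and hlya_triple_triple: "T (a (a u)) (a (a v)) (T x y z)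
        = T (T u v x) (a (a y)) (a (a z)) + T (a (a x)) (T u v y) (a (a z))
          + T (a (a x)) (a (a y)) (T u v z)"
  using assms unfolding hlya_def by (elim conjE; metis)+

lemma deformationD:
  assumes "deformation s b T a F G"
  shows deformation_br0: "F 0 = b" and deformation_tr0: "G 0 = T"
    and deformation_bilin: "bilin s (F i)" and deformation_trilin: "trilin s (G i)"
    and deformation_hlya: "hlya (fps_scale s) (ext2 F) (ext3 G) (ext_map a)"
  using assms unfolding deformation_def by blast+

lemma ext1_nth: "ext1 P x $ n = (\<Sum>i\<le>n. P i (x $ (n - i)))" by (simp add: ext1_def)
lemma ext2_nth: "ext2 F x y $ n = (\<Sum>i\<le>n. \<Sum>j\<le>n - i. F i (x $ j) (y $ (n - i - j)))"
  by (simp add: ext2_def)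
lemma ext3_nth: "ext3 G x y z $ n = (\<Sum>i\<le>n. \<Sum>j\<le>n - i. \<Sum>k\<le>n - i - j.
       G i (x $ j) (y $ k) (z $ (n - i - j - k)))"
  by (simp add: ext3_def)
lemma ext_map_nth: "ext_map a x $ n = a (x $ n)" by (simp add: ext_map_def)
lemma fps_scale_nth: "fps_scale s c x $ n = (\<Sum>i\<le>n. s (c $ i) (x $ (n - i)))"
  by (simp add: fps_scale_def)

lemma ext2_nth_triples: "ext2 F x y $ m = (\<Sum>(i,j,k)\<in>triples m. F i (x $ j) (y $ k))"
  unfolding ext2_nth by (rule sum_nested_eq_triples)

lemma ext3_nth_quadruples: "ext3 G x y z $ m = (\<Sum>(i,j,k,l)\<in>quadruples m. G i (x $ j) (y $ k) (z $ l))"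
  unfolding ext3_nth by (rule sum_nested_eq_quadruples)

lemma fps_scale_const_nth:
  assumes "module s"
  shows "fps_scale s (fps_const k) w $ n = s k (w $ n)"
  unfolding fps_scale_nth
  by (subst sum_atMost_eq_first) (simp_all add: module.scale_zero_left[OF assms])

lemma fps_scale_X_nth:
  assumes "module s"
  shows "fps_scale s fps_X w $ n = (if n = 0 then 0 else w $ (n - 1))"
proof (cases n)
  case 0 then show ?thesis by (simp add: fps_scale_nth module.scale_zero_left[OF assms])
next
  case (Suc m)
  have "fps_scale s fps_X w $ n = (\<Sum>i\<in>{1}. s (fps_X $ i) (w $ (n - i)))"
    unfolding fps_scale_nth
    by (rule sum.mono_neutral_right) (auto simp: Suc module.scale_zero_left[OF assms] fps_X_nth)
  then show ?thesis by (simp add: Suc fps_X_nth module.scale_one[OF assms])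
qed

lemma fps_scale_const_const:
  "module s \<Longrightarrow> fps_scale s (fps_const k) (fps_const u) = fps_const (s k u)"
  by (rule fps_ext) (simp add: fps_scale_const_nth module.scale_zero_right)

lemma ext_map_const: "lin s a \<Longrightarrow> ext_map a (fps_const x) = fps_const (a x)"
  by (rule fps_ext) (simp add: ext_map_nth lin_zero)

lemma ext2_nth_series_right:
  assumes "\<And>i. bilin s (F i)"
  shows "ext2 F (fps_const x) w $ m = (\<Sum>i\<le>m. F i x (w $ (m - i)))"
  unfolding ext2_nth
  by (intro sum.cong refl, subst sum_atMost_eq_first) (auto simp: bilin_zero1[OF assms])

lemma ext2_nth_series_left:
  assumes "\<And>i. bilin s (F i)"
  shows "ext2 F w (fps_const y) $ m = (\<Sum>i\<le>m. F i (w $ (m - i)) y)"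
  unfolding ext2_nth
  by (intro sum.cong refl, subst sum_atMost_eq_last) (auto simp: bilin_zero2[OF assms])

lemma ext2_const_nth:
  assumes "\<And>i. bilin s (F i)"
  shows "ext2 F (fps_const x) (fps_const y) $ m = F m x y"
  unfolding ext2_nth_series_right[OF assms]
  by (subst sum_atMost_eq_last) (auto simp: bilin_zero2[OF assms])

lemma ext3_nth_series_last:
  assumes "\<And>i. trilin s (G i)"
  shows "ext3 G (fps_const x) (fps_const y) w $ m = (\<Sum>i\<le>m. G i x y (w $ (m - i)))"
  unfolding ext3_nth
  by (intro sum.cong refl, subst sum_atMost_eq_first, simp add: trilin_zero1[OF assms],
      subst sum_atMost_eq_first) (auto simp: trilin_zero2[OF assms])

lemma ext3_nth_series_middle:
  assumes "\<And>i. trilin s (G i)"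
  shows "ext3 G (fps_const x) w (fps_const z) $ m = (\<Sum>i\<le>m. G i x (w $ (m - i)) z)"
  unfolding ext3_nth
  by (intro sum.cong refl, subst sum_atMost_eq_first, simp add: trilin_zero1[OF assms],
      subst sum_atMost_eq_last) (auto simp: trilin_zero3[OF assms])

lemma ext3_nth_series_first:
  assumes "\<And>i. trilin s (G i)"
  shows "ext3 G w (fps_const y) (fps_const z) $ m = (\<Sum>i\<le>m. G i (w $ (m - i)) y z)"
proof -
  have "(\<Sum>k\<le>m - i - j. G i (w $ j) (fps_const y $ k) (fps_const z $ (m - i - j - k)))
      = G i (w $ j) y (fps_const z $ (m - i - j))" for i j
    by (subst sum_atMost_eq_first) (auto simp: trilin_zero2[OF assms])
  then show ?thesis
    unfolding ext3_nth
    by (intro sum.cong refl, simp, subst sum_atMost_eq_last) (auto simp: trilin_zero3[OF assms])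
qed

lemma ext3_const_nth:
  assumes "\<And>i. trilin s (G i)"
  shows "ext3 G (fps_const x) (fps_const y) (fps_const z) $ m = G m x y z"
  unfolding ext3_nth_series_last[OF assms]
  by (subst sum_atMost_eq_last) (auto simp: trilin_zero3[OF assms])

lemma ext1_cong_nth:
  assumes "\<And>i. i \<le> n \<Longrightarrow> P i = Q i" "\<And>j. j \<le> n \<Longrightarrow> x $ j = y $ j"
  shows "ext1 P x $ n = ext1 Q y $ n"
  unfolding ext1_nth using assms by (intro sum.cong) auto

lemma ext2_cong_nth:
  assumes "\<And>i. i \<le> n \<Longrightarrow> F i = F' i" "\<And>j. j \<le> n \<Longrightarrow> x $ j = x' $ j"
     "\<And>j. j \<le> n \<Longrightarrow> y $ j = y' $ j"
  shows "ext2 F x y $ n = ext2 F' x' y' $ n"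
  unfolding ext2_nth using assms by (intro sum.cong) auto

lemma ext3_cong_nth:
  assumes "\<And>i. i \<le> n \<Longrightarrow> G i = G' i" "\<And>j. j \<le> n \<Longrightarrow> x $ j = x' $ j"
     "\<And>j. j \<le> n \<Longrightarrow> y $ j = y' $ j" "\<And>j. j \<le> n \<Longrightarrow> z $ j = z' $ j"
  shows "ext3 G x y z $ n = ext3 G' x' y' z' $ n"
  unfolding ext3_nth using assms by (intro sum.cong) auto

section \<open>Gauges\<close>

text \<open>A gauge is the coefficient sequence of a series \<open>\<Sum> P i t^i\<close> of linear maps, acting on
  \<open>L[[t]]\<close> through \<open>ext1\<close>.\<close>

definition gauge :: "('k \<Rightarrow> 'v \<Rightarrow> 'v) \<Rightarrow> ('v \<Rightarrow> 'v) \<Rightarrow> (nat \<Rightarrow> 'v::ab_group_add \<Rightarrow> 'v) \<Rightarrow> bool" where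
  "gauge s a P \<longleftrightarrow> P 0 = id \<and> (\<forall>i. HomC1 s a (P i))"

definition intertwines :: "(nat \<Rightarrow> 'v \<Rightarrow> 'v)
     \<Rightarrow> (nat \<Rightarrow> 'v \<Rightarrow> 'v \<Rightarrow> 'v) \<Rightarrow> (nat \<Rightarrow> 'v \<Rightarrow> 'v \<Rightarrow> 'v \<Rightarrow> 'v)
     \<Rightarrow> (nat \<Rightarrow> 'v \<Rightarrow> 'v \<Rightarrow> 'v) \<Rightarrow> (nat \<Rightarrow> 'v \<Rightarrow> 'v \<Rightarrow> 'v \<Rightarrow> 'v::comm_monoid_add) \<Rightarrow> bool" where
  "intertwines P F G F' G' \<longleftrightarrow>
     (\<forall>x y. ext1 P (ext2 F x y) = ext2 F' (ext1 P x) (ext1 P y)) \<and>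
     (\<forall>x y z. ext1 P (ext3 G x y z) = ext3 G' (ext1 P x) (ext1 P y) (ext1 P z))"

definition coeff_comp :: "(nat \<Rightarrow> 'v \<Rightarrow> 'v) \<Rightarrow> (nat \<Rightarrow> 'v \<Rightarrow> 'v) \<Rightarrow> nat \<Rightarrow> 'v \<Rightarrow> 'v::comm_monoid_add" where
  "coeff_comp P Q k v = (\<Sum>i\<le>k. P i (Q (k - i) v))"

lemma gaugeD:
  assumes "gauge s a P"
  shows gauge_id: "P 0 = id" and gauge_lin: "lin s (P i)" and gauge_twist: "P i (a x) = a (P i x)"
  using assms by (auto simp: gauge_def HomC1_def)

lemma ext1_coeff_comp:
  assumes "\<And>i. lin s (P i)"
  shows "ext1 P (ext1 Q x) = ext1 (coeff_comp P Q) x"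
proof (rule fps_ext)
  fix m
  have "ext1 P (ext1 Q x) $ m = (\<Sum>i\<le>m. \<Sum>j\<le>m - i. P i (Q j (x $ (m - i - j))))"
    by (simp add: ext1_nth lin_sum[OF assms] diff_diff_add)
  also have "\<dots> = (\<Sum>(i,j,k)\<in>triples m. P i (Q j (x $ k)))" by (rule sum_nested_eq_triples)
  also have "\<dots> = (\<Sum>k\<le>m. \<Sum>i\<le>k. P i (Q (k - i) (x $ (m - k))))"
    by (rule sum_nested_eq_triples'[symmetric])
  finally show "ext1 P (ext1 Q x) $ m = ext1 (coeff_comp P Q) x $ m"
    by (simp add: ext1_nth coeff_comp_def)
qed

lemma ext1_lin:
  fixes P :: "nat \<Rightarrow> 'v::ab_group_add \<Rightarrow> 'v"
  assumes s: "module s" and P: "\<And>i. lin s (P i)"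
  shows "lin (fps_scale s) (ext1 P)"
  unfolding lin_def
proof (intro conjI allI)
  fix x y
  show "ext1 P (x + y) = ext1 P x + ext1 P y"
    by (rule fps_ext) (simp add: ext1_nth lin_add[OF P] sum.distrib)
next
  fix c x
  show "ext1 P (fps_scale s c x) = fps_scale s c (ext1 P x)"
  proof (rule fps_ext)
    fix m
    have "ext1 P (fps_scale s c x) $ m = (\<Sum>i\<le>m. \<Sum>j\<le>m - i. s (c $ j) (P i (x $ (m - i - j))))"
      by (simp add: ext1_nth fps_scale_nth lin_sum[OF P] lin_scale[OF P] diff_diff_add)
    also have "\<dots> = (\<Sum>(i,j,k)\<in>triples m. s (c $ j) (P i (x $ k)))"
      by (rule sum_nested_eq_triples)
    also have "\<dots> = (\<Sum>(j,i,k)\<in>triples m. s (c $ j) (P i (x $ k)))"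
      by (rule sum_triples_swap)
    also have "\<dots> = (\<Sum>j\<le>m. \<Sum>i\<le>m - j. s (c $ j) (P i (x $ (m - j - i))))"
      by (rule sum_nested_eq_triples[symmetric])
    also have "\<dots> = fps_scale s c (ext1 P x) $ m"
      by (simp add: ext1_nth fps_scale_nth module.scale_sum_right[OF s] diff_diff_add)
    finally show "ext1 P (fps_scale s c x) $ m = fps_scale s c (ext1 P x) $ m" .
  qed
qed

lemma ext1_ext_map_commute:
  assumes "lin s a" and "\<And>i x. P i (a x) = a (P i x)"
  shows "ext1 P (ext_map a x) = ext_map a (ext1 P x)"
  by (rule fps_ext) (simp add: ext1_nth ext_map_nth assms lin_sum[OF assms(1)])

lemma ext1_nth_split: "ext1 P x $ n = P 0 (x $ n) + (\<Sum>j<n. P (n - j) (x $ j))"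
proof -
  have "ext1 P x $ n = P 0 (x $ n) + (\<Sum>i<n. P (Suc i) (x $ (n - Suc i)))"
    by (cases n) (simp_all add: ext1_nth sum.atMost_Suc_shift lessThan_Suc_atMost del: sum.atMost_Suc)
  also have "(\<Sum>i<n. P (Suc i) (x $ (n - Suc i))) = (\<Sum>i<n. P (n - (n - Suc i)) (x $ (n - Suc i)))"
    by (rule sum.cong) auto
  also have "\<dots> = (\<Sum>j<n. P (n - j) (x $ j))"
    by (rule sum.nat_diff_reindex)
  finally show ?thesis .
qed

text \<open>Since \<open>P 0 = id\<close>, the coefficients of a preimage can be solved for degree by degree.\<close>

fun ext1_preimage_nth :: "(nat \<Rightarrow> 'v \<Rightarrow> 'v) \<Rightarrow> 'v::ab_group_add fps \<Rightarrow> nat \<Rightarrow> 'v" where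
  "ext1_preimage_nth P y n = y $ n - (\<Sum>j<n. P (n - j) (ext1_preimage_nth P y j))"

declare ext1_preimage_nth.simps[simp del]

lemma ext1_bij:
  fixes P :: "nat \<Rightarrow> 'v::ab_group_add \<Rightarrow> 'v"
  assumes "P 0 = id"
  shows "bij (ext1 P)"
proof (rule bijI)
  show "inj (ext1 P)"
  proof (rule injI)
    fix x y assume eq: "ext1 P x = ext1 P y"
    have "\<forall>j<n. x $ j = y $ j" for n
    proof (induction n)
      case (Suc n)
      have "x $ n + (\<Sum>j<n. P (n - j) (x $ j)) = y $ n + (\<Sum>j<n. P (n - j) (y $ j))"
        using arg_cong[OF eq, of "\<lambda>p. p $ n"] by (simp add: ext1_nth_split assms)
      moreover have "(\<Sum>j<n. P (n - j) (x $ j)) = (\<Sum>j<n. P (n - j) (y $ j))"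
        using Suc by simp
      ultimately show ?case using Suc by (simp add: less_Suc_eq)
    qed simp
    then show "x = y" by (intro fps_ext) blast
  qed
next
  show "surj (ext1 P)"
  proof (rule surjI)
    fix y
    show "ext1 P (Abs_fps (ext1_preimage_nth P y)) = y"
    proof (rule fps_ext)
      fix n
      show "ext1 P (Abs_fps (ext1_preimage_nth P y)) $ n = y $ n"
        by (simp add: ext1_nth_split assms ext1_preimage_nth.simps[of P y n])
    qed
  qed
qed

lemma gauge_coeff_comp:
  assumes s: "module s" and a: "lin s a" and P: "gauge s a P" and Q: "gauge s a Q"
  shows "gauge s a (coeff_comp P Q)"
  unfolding gauge_def HomC1_def
proof (intro conjI allI)
  note P' = gaugeD[OF P] and Q' = gaugeD[OF Q]
  show "coeff_comp P Q 0 = id" by (auto simp: coeff_comp_def P' Q')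
  fix i
  show "lin s (coeff_comp P Q i)"
    unfolding lin_def coeff_comp_def
    by (simp add: lin_add[OF P'(2)] lin_add[OF Q'(2)] lin_scale[OF P'(2)] lin_scale[OF Q'(2)]
        sum.distrib module.scale_sum_right[OF s])
  show "coeff_comp P Q i (a x) = a (coeff_comp P Q i x)" for x
    unfolding coeff_comp_def
    by (simp add: P' Q' lin_sum[OF a])
qed

lemma intertwines_coeff_comp:
  assumes "\<And>i. lin s (Q i)" "intertwines P F G F' G'" "intertwines Q F' G' F'' G''"
  shows "intertwines (coeff_comp Q P) F G F'' G''"
  using assms(2,3) unfolding intertwines_def ext1_coeff_comp[OF assms(1), symmetric] by simp

lemma gauge_intertwines_equivalent:
  assumes "module s" "lin s a" "gauge s a P" "intertwines P F G F' G'"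
  shows "equivalent_deformations s a F G F' G'"
proof -
  note PD = gaugeD[OF assms(3)]
  show ?thesis
    unfolding equivalent_deformations_def
  proof (intro exI conjI)
    show "lin (fps_scale s) (ext1 P)" by (rule ext1_lin[OF assms(1) PD(2)])
    show "bij (ext1 P)" by (rule ext1_bij[where P=P, OF PD(1)])
    show "ext1 P \<circ> ext_map a = ext_map a \<circ> ext1 P"
      using ext1_ext_map_commute[where P=P, OF assms(2) PD(3)] by auto
  qed (use PD assms(4) in \<open>auto simp: intertwines_def\<close>)
qed

definition id_gauge :: "nat \<Rightarrow> 'v \<Rightarrow> 'v::zero" where
  "id_gauge i = (if i = 0 then id else (\<lambda>_. 0))"

lemma ext1_id_gauge: "ext1 id_gauge x = (x :: 'v::comm_monoid_add fps)"
  by (rule fps_ext) (simp add: ext1_nth id_gauge_def sum_atMost_eq_first)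

lemma gauge_id_gauge: "module s \<Longrightarrow> lin s a \<Longrightarrow> gauge s a id_gauge"
  by (simp add: gauge_def HomC1_def id_gauge_def lin_def lin_zero[of s a] module.scale_zero_right)

lemma intertwines_id_gauge: "intertwines id_gauge F G F G"
  by (simp add: intertwines_def ext1_id_gauge)

section \<open>Multilinear maps over formal power series\<close>

lemma fps_decompose_X:
  assumes "module s"
  shows "x = fps_const (x $ 0) + fps_scale s fps_X (Abs_fps (\<lambda>n. x $ Suc n))"
  by (rule fps_ext) (simp add: fps_scale_X_nth[OF assms])

lemma lin_fps_nth_expansion:
  fixes \<Lambda> :: "'v::ab_group_add fps \<Rightarrow> 'v fps"
  assumes s: "module s" and L: "lin (fps_scale s) \<Lambda>"
  shows "\<Lambda> x $ m = (\<Sum>j\<le>m. \<Lambda> (fps_const (x $ j)) $ (m - j))"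
proof -
  have dec: "\<Lambda> x $ n = \<Lambda> (fps_const (x $ 0)) $ n
      + (if n = 0 then 0 else \<Lambda> (Abs_fps (\<lambda>n. x $ Suc n)) $ (n - 1))" for x n
  proof -
    have "\<Lambda> x = \<Lambda> (fps_const (x $ 0)) + fps_scale s fps_X (\<Lambda> (Abs_fps (\<lambda>n. x $ Suc n)))"
      by (subst fps_decompose_X[OF s]) (simp only: lin_add[OF L] lin_scale[OF L])
    then show ?thesis by (simp add: fps_scale_X_nth[OF s])
  qed
  show ?thesis
  proof (induction m arbitrary: x)
    case 0 show ?case using dec[of x 0] by simp
  next
    case (Suc m)
    have "\<Lambda> x $ Suc m = \<Lambda> (fps_const (x $ 0)) $ Suc m + \<Lambda> (Abs_fps (\<lambda>n. x $ Suc n)) $ m"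
      using dec[of x "Suc m"] by simp
    then show ?case
      by (simp add: Suc.IH sum.atMost_Suc_shift del: sum.atMost_Suc)
  qed
qed

lemma bilin_fps_eq_ext2:
  assumes s: "module s" and B: "bilin (fps_scale s) B"
  shows "B = ext2 (\<lambda>i u v. B (fps_const u) (fps_const v) $ i)"
proof (intro ext fps_ext)
  fix x y m
  let ?f = "\<lambda>j l i. B (fps_const (x $ j)) (fps_const (y $ l)) $ i"
  have "B x y $ m = (\<Sum>j\<le>m. B (fps_const (x $ j)) y $ (m - j))"
    by (rule lin_fps_nth_expansion[OF s bilin_lin1[OF B]])
  also have "\<dots> = (\<Sum>j\<le>m. \<Sum>l\<le>m - j. ?f j l (m - j - l))"
    by (intro sum.cong refl lin_fps_nth_expansion[OF s bilin_lin2[OF B]])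
  also have "\<dots> = (\<Sum>(j,l,i)\<in>triples m. ?f j l i)"
    by (rule sum_nested_eq_triples)
  also have "\<dots> = (\<Sum>(i,j,l)\<in>triples m. ?f j l i)"
    by (rule sum_triples_rotate)
  finally show "B x y $ m = ext2 (\<lambda>i u v. B (fps_const u) (fps_const v) $ i) x y $ m"
    by (simp add: ext2_nth_triples)
qed

lemma trilin_fps_eq_ext3:
  assumes s: "module s" and G: "trilin (fps_scale s) G"
  shows "G = ext3 (\<lambda>i u v w. G (fps_const u) (fps_const v) (fps_const w) $ i)"
proof (intro ext fps_ext)
  fix x y z m
  let ?f = "\<lambda>j l p i. G (fps_const (x $ j)) (fps_const (y $ l)) (fps_const (z $ p)) $ i"
  have "G x y z $ m = (\<Sum>j\<le>m. G (fps_const (x $ j)) y z $ (m - j))"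
    by (rule lin_fps_nth_expansion[OF s trilin_lin1[OF G]])
  also have "\<dots> = (\<Sum>j\<le>m. \<Sum>l\<le>m - j. G (fps_const (x $ j)) (fps_const (y $ l)) z $ (m - j - l))"
    by (intro sum.cong refl lin_fps_nth_expansion[OF s trilin_lin2[OF G]])
  also have "\<dots> = (\<Sum>j\<le>m. \<Sum>l\<le>m - j. \<Sum>p\<le>m - j - l. ?f j l p (m - j - l - p))"
    by (intro sum.cong refl lin_fps_nth_expansion[OF s trilin_lin3[OF G]])
  also have "\<dots> = (\<Sum>(j,l,p,i)\<in>quadruples m. ?f j l p i)"
    by (rule sum_nested_eq_quadruples)
  also have "\<dots> = (\<Sum>(i,j,l,p)\<in>quadruples m. ?f j l p i)"
    by (rule sum_quadruples_rotate)
  finally show "G x y z $ m = ext3 (\<lambda>i u v w. G (fps_const u) (fps_const v) (fps_const w) $ i) x y z $ m"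
    by (simp add: ext3_nth_quadruples)
qed

lemma lin_fps_const_coeff:
  assumes s: "module s" and L: "lin (fps_scale s) \<Lambda>"
  shows "lin s (\<lambda>u. \<Lambda> (fps_const u) $ i)"
  unfolding lin_def
  by (simp only: fps_const_add[symmetric] lin_add[OF L] fps_add_nth
      fps_scale_const_const[OF s, symmetric] lin_scale[OF L] fps_scale_const_nth[OF s] simp_thms)

lemma bilin_fps_const_coeff:
  "module s \<Longrightarrow> bilin (fps_scale s) B \<Longrightarrow> bilin s (\<lambda>u v. B (fps_const u) (fps_const v) $ i)"
  unfolding bilin_def by (auto intro: lin_fps_const_coeff)

lemma trilin_fps_const_coeff:
  "module s \<Longrightarrow> trilin (fps_scale s) G
    \<Longrightarrow> trilin s (\<lambda>u v w. G (fps_const u) (fps_const v) (fps_const w) $ i)"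
  unfolding trilin_def by (auto intro: lin_fps_const_coeff)

section \<open>Conjugating a deformation by a gauge\<close>

lemma lin_inv:
  assumes "bij \<Phi>" and \<Phi>: "lin S \<Phi>"
  shows "lin S (inv \<Phi>)"
proof -
  have "\<Phi> (inv \<Phi> x) = x" and "inv \<Phi> (\<Phi> x) = x" for x
    using assms(1) by (simp_all add: bij_is_surj surj_f_inv_f bij_is_inj)
  then show ?thesis
    unfolding lin_def by (metis lin_add[OF \<Phi>] lin_scale[OF \<Phi>])
qed

lemma bilin_conj:
  assumes \<Phi>: "lin S \<Phi>" and \<Psi>: "lin S \<Psi>" and B: "bilin S B"
  shows "bilin S (\<lambda>x y. \<Phi> (B (\<Psi> x) (\<Psi> y)))"
  by (simp add: bilin_def lin_def lin_add[OF \<Phi>] lin_scale[OF \<Phi>] lin_add[OF \<Psi>] lin_scale[OF \<Psi>]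
      lin_add[OF bilin_lin1[OF B]] lin_add[OF bilin_lin2[OF B]]
      lin_scale[OF bilin_lin1[OF B]] lin_scale[OF bilin_lin2[OF B]])

lemma trilin_conj:
  assumes \<Phi>: "lin S \<Phi>" and \<Psi>: "lin S \<Psi>" and T: "trilin S T"
  shows "trilin S (\<lambda>x y z. \<Phi> (T (\<Psi> x) (\<Psi> y) (\<Psi> z)))"
  by (simp add: trilin_def lin_def lin_add[OF \<Phi>] lin_scale[OF \<Phi>] lin_add[OF \<Psi>] lin_scale[OF \<Psi>]
      lin_add[OF trilin_lin1[OF T]] lin_add[OF trilin_lin2[OF T]] lin_add[OF trilin_lin3[OF T]]
      lin_scale[OF trilin_lin1[OF T]] lin_scale[OF trilin_lin2[OF T]] lin_scale[OF trilin_lin3[OF T]])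

lemma hlya_conj:
  fixes S :: "'r::comm_ring_1 \<Rightarrow> 'm::ab_group_add \<Rightarrow> 'm"
  assumes H: "hlya S B Tt A" and bij: "bij \<Phi>" and \<Phi>: "lin S \<Phi>"
    and \<Phi>A: "\<And>x. \<Phi> (A x) = A (\<Phi> x)"
  shows "hlya S (\<lambda>x y. \<Phi> (B (inv \<Phi> x) (inv \<Phi> y)))
                 (\<lambda>x y z. \<Phi> (Tt (inv \<Phi> x) (inv \<Phi> y) (inv \<Phi> z))) A"
proof -
  define \<Psi> where "\<Psi> = inv \<Phi>"
  have \<Psi>: "lin S \<Psi>" unfolding \<Psi>_def by (rule lin_inv[OF bij \<Phi>])
  have \<Phi>\<Psi>: "\<Phi> (\<Psi> x) = x" and \<Psi>\<Phi>: "\<Psi> (\<Phi> x) = x" for x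
    using bij by (simp_all add: \<Psi>_def bij_is_surj surj_f_inv_f bij_is_inj)
  have \<Psi>A: "\<Psi> (A x) = A (\<Psi> x)" for x
    by (metis \<Phi>\<Psi> \<Psi>\<Phi> \<Phi>A)
  note simps = \<Phi>\<Psi> \<Psi>\<Phi> \<Psi>A \<Phi>A[symmetric] lin_add[OF \<Phi>] lin_zero[OF \<Phi>]
  show ?thesis
    unfolding hlya_def \<Psi>_def[symmetric]
  proof (intro conjI allI)
    show "module S" by (rule hlya_module[OF H])
    show "lin S A" by (rule hlya_lin[OF H])
    show "bilin S (\<lambda>x y. \<Phi> (B (\<Psi> x) (\<Psi> y)))" by (rule bilin_conj[OF \<Phi> \<Psi> hlya_bilin[OF H]])
    show "trilin S (\<lambda>x y z. \<Phi> (Tt (\<Psi> x) (\<Psi> y) (\<Psi> z)))"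
      by (rule trilin_conj[OF \<Phi> \<Psi> hlya_trilin[OF H]])
    fix x y z u v
    show "A (\<Phi> (B (\<Psi> x) (\<Psi> y))) = \<Phi> (B (\<Psi> (A x)) (\<Psi> (A y)))"
      by (simp add: simps hlya_twist_bracket[OF H])
    show "A (\<Phi> (Tt (\<Psi> x) (\<Psi> y) (\<Psi> z))) = \<Phi> (Tt (\<Psi> (A x)) (\<Psi> (A y)) (\<Psi> (A z)))"
      by (simp add: simps hlya_twist_triple[OF H])
    show "\<Phi> (B (\<Psi> x) (\<Psi> x)) = 0" by (simp add: simps hlya_bracket_alt[OF H])
    show "\<Phi> (Tt (\<Psi> x) (\<Psi> x) (\<Psi> y)) = 0" by (simp add: simps hlya_triple_alt[OF H])
    show "\<Phi> (B (\<Psi> (\<Phi> (B (\<Psi> x) (\<Psi> y)))) (\<Psi> (A z))) + \<Phi> (Tt (\<Psi> x) (\<Psi> y) (\<Psi> z)) +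
          (\<Phi> (B (\<Psi> (\<Phi> (B (\<Psi> y) (\<Psi> z)))) (\<Psi> (A x))) + \<Phi> (Tt (\<Psi> y) (\<Psi> z) (\<Psi> x))) +
          (\<Phi> (B (\<Psi> (\<Phi> (B (\<Psi> z) (\<Psi> x)))) (\<Psi> (A y))) + \<Phi> (Tt (\<Psi> z) (\<Psi> x) (\<Psi> y))) = 0"
      using arg_cong[OF hlya_jacobi[OF H, of "\<Psi> x" "\<Psi> y" "\<Psi> z"], of \<Phi>] by (simp add: simps)
    show "\<Phi> (Tt (\<Psi> (\<Phi> (B (\<Psi> x) (\<Psi> y)))) (\<Psi> (A z)) (\<Psi> (A u))) +
          \<Phi> (Tt (\<Psi> (\<Phi> (B (\<Psi> y) (\<Psi> z)))) (\<Psi> (A x)) (\<Psi> (A u))) +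
          \<Phi> (Tt (\<Psi> (\<Phi> (B (\<Psi> z) (\<Psi> x)))) (\<Psi> (A y)) (\<Psi> (A u))) = 0"
      using arg_cong[OF hlya_triple_cyclic[OF H, of "\<Psi> x" "\<Psi> y" "\<Psi> z" "\<Psi> u"], of \<Phi>]
      by (simp add: simps)
    show "\<Phi> (Tt (\<Psi> (A x)) (\<Psi> (A y)) (\<Psi> (\<Phi> (B (\<Psi> u) (\<Psi> v))))) =
          \<Phi> (B (\<Psi> (\<Phi> (Tt (\<Psi> x) (\<Psi> y) (\<Psi> u)))) (\<Psi> (A (A v)))) +
          \<Phi> (B (\<Psi> (A (A u))) (\<Psi> (\<Phi> (Tt (\<Psi> x) (\<Psi> y) (\<Psi> v)))))"
      using arg_cong[OF hlya_triple_bracket[OF H, of "\<Psi> x" "\<Psi> y" "\<Psi> u" "\<Psi> v"], of \<Phi>]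
      by (simp add: simps)
    show "\<Phi> (Tt (\<Psi> (A (A u))) (\<Psi> (A (A v))) (\<Psi> (\<Phi> (Tt (\<Psi> x) (\<Psi> y) (\<Psi> z))))) =
          \<Phi> (Tt (\<Psi> (\<Phi> (Tt (\<Psi> u) (\<Psi> v) (\<Psi> x)))) (\<Psi> (A (A y))) (\<Psi> (A (A z)))) +
          \<Phi> (Tt (\<Psi> (A (A x))) (\<Psi> (\<Phi> (Tt (\<Psi> u) (\<Psi> v) (\<Psi> y)))) (\<Psi> (A (A z)))) +
          \<Phi> (Tt (\<Psi> (A (A x))) (\<Psi> (A (A y))) (\<Psi> (\<Phi> (Tt (\<Psi> u) (\<Psi> v) (\<Psi> z)))))"
      using arg_cong[OF hlya_triple_triple[OF H, of "\<Psi> u" "\<Psi> v" "\<Psi> x" "\<Psi> y" "\<Psi> z"], of \<Phi>]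
      by (simp add: simps)
  qed
qed

definition conj_br :: "(nat \<Rightarrow> 'v \<Rightarrow> 'v) \<Rightarrow> (nat \<Rightarrow> 'v \<Rightarrow> 'v \<Rightarrow> 'v) \<Rightarrow> nat \<Rightarrow> 'v \<Rightarrow> 'v \<Rightarrow> 'v::ab_group_add"
  where "conj_br P F i u v =
    ext1 P (ext2 F (inv (ext1 P) (fps_const u)) (inv (ext1 P) (fps_const v))) $ i"

definition conj_tr :: "(nat \<Rightarrow> 'v \<Rightarrow> 'v) \<Rightarrow> (nat \<Rightarrow> 'v \<Rightarrow> 'v \<Rightarrow> 'v \<Rightarrow> 'v) \<Rightarrow> nat \<Rightarrow> 'v \<Rightarrow> 'v \<Rightarrow> 'v \<Rightarrow> 'v::ab_group_add"
  where "conj_tr P G i u v w =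
    ext1 P (ext3 G (inv (ext1 P) (fps_const u)) (inv (ext1 P) (fps_const v))
      (inv (ext1 P) (fps_const w))) $ i"

lemma conj_deformation:
  assumes s: "module s" and a: "lin s a" and D: "deformation s b T a F G" and P: "gauge s a P"
  shows "deformation s b T a (conj_br P F) (conj_tr P G)"
    and "intertwines P F G (conj_br P F) (conj_tr P G)"
proof -
  note PD = gaugeD[OF P]
  define E where "E = ext1 P"
  have E_bij: "bij E" unfolding E_def by (rule ext1_bij[where P=P, OF PD(1)])
  then have E_inv: "E (inv E x) = x" "inv E (E x) = x" for x
    by (simp_all add: bij_is_surj surj_f_inv_f bij_is_inj)
  have E_nth_0: "E x $ 0 = x $ 0" for x
    by (simp add: E_def ext1_nth PD(1))
  have H: "hlya (fps_scale s) (\<lambda>x y. E (ext2 F (inv E x) (inv E y)))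
      (\<lambda>x y z. E (ext3 G (inv E x) (inv E y) (inv E z))) (ext_map a)"
    unfolding E_def using ext1_ext_map_commute[where P=P, OF a PD(3)]
    by (intro hlya_conj[OF deformation_hlya[OF D]] ext1_lin[OF s PD(2)])
       (simp_all add: E_def[symmetric] E_bij)
  have br: "ext2 (conj_br P F) = (\<lambda>x y. E (ext2 F (inv E x) (inv E y)))"
    using bilin_fps_eq_ext2[OF s hlya_bilin[OF H]] by (simp add: conj_br_def[abs_def] E_def)
  have tr: "ext3 (conj_tr P G) = (\<lambda>x y z. E (ext3 G (inv E x) (inv E y) (inv E z)))"
    using trilin_fps_eq_ext3[OF s hlya_trilin[OF H]] by (simp add: conj_tr_def[abs_def] E_def)
  show "intertwines P F G (conj_br P F) (conj_tr P G)"
    by (simp add: intertwines_def br tr E_inv flip: E_def)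
  have inv_const_nth_0: "inv E (fps_const u) $ 0 = u" for u
    using arg_cong[OF E_inv(1)[of "fps_const u"], of "\<lambda>x. x $ 0"]
    by (simp add: E_nth_0)
  show "deformation s b T a (conj_br P F) (conj_tr P G)"
    unfolding deformation_def
  proof (intro conjI allI)
    show "conj_br P F 0 = b"
      by (intro ext) (simp add: conj_br_def E_nth_0 ext2_nth inv_const_nth_0
          deformation_br0[OF D] flip: E_def)
    show "conj_tr P G 0 = T"
      by (intro ext) (simp add: conj_tr_def E_nth_0 ext3_nth inv_const_nth_0
          deformation_tr0[OF D] flip: E_def)
    show "bilin s (conj_br P F i)" for i
      using bilin_fps_const_coeff[OF s hlya_bilin[OF H], of i] by (simp add: conj_br_def[abs_def] E_def)
    show "trilin s (conj_tr P G i)" for i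
      using trilin_fps_const_coeff[OF s hlya_trilin[OF H], of i] by (simp add: conj_tr_def[abs_def] E_def)
    show "hlya (fps_scale s) (ext2 (conj_br P F)) (ext3 (conj_tr P G)) (ext_map a)"
      using H by (simp only: br tr)
  qed
qed

section \<open>Normalizing a deformation order by order\<close>

definition null_upto :: "nat \<Rightarrow> (nat \<Rightarrow> 'v \<Rightarrow> 'v \<Rightarrow> 'v) \<Rightarrow> (nat \<Rightarrow> 'v \<Rightarrow> 'v \<Rightarrow> 'v \<Rightarrow> 'v::zero) \<Rightarrow> bool" where
  "null_upto n F G \<longleftrightarrow> (\<forall>k. 0 < k \<and> k \<le> n \<longrightarrow> F k = (\<lambda>x y. 0) \<and> G k = (\<lambda>x y z. 0))"

lemma null_upto_sum_Suc:
  assumes "null_upto n F G"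
  shows "(\<Sum>i\<le>Suc n. F i (X i) (Y i)) = F 0 (X 0) (Y 0) + F (Suc n) (X (Suc n)) (Y (Suc n))"
    and "(\<Sum>i\<le>Suc n. G i (X i) (Y i) (Z i))
      = G 0 (X 0) (Y 0) (Z 0) + G (Suc n) (X (Suc n)) (Y (Suc n)) (Z (Suc n))"
  by (rule sum_atMost_eq_first_last; use assms in \<open>auto simp: null_upto_def\<close>)+

context
  fixes s :: "'k::field \<Rightarrow> 'v::ab_group_add \<Rightarrow> 'v" and b :: "'v \<Rightarrow> 'v \<Rightarrow> 'v"
    and T :: "'v \<Rightarrow> 'v \<Rightarrow> 'v \<Rightarrow> 'v" and a :: "'v \<Rightarrow> 'v"
    and F :: "nat \<Rightarrow> 'v \<Rightarrow> 'v \<Rightarrow> 'v" and G :: "nat \<Rightarrow> 'v \<Rightarrow> 'v \<Rightarrow> 'v \<Rightarrow> 'v" and n :: nat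
  assumes hl: "hlya s b T a" and D: "deformation s b T a F G" and null: "null_upto n F G"
begin

lemmas leading_coeff_simps = bilin_zero[OF deformation_bilin[OF D]]
  trilin_zero[OF deformation_trilin[OF D]]
  deformation_br0[OF D, symmetric] deformation_tr0[OF D, symmetric]
  ext2_const_nth[OF deformation_bilin[OF D]] ext3_const_nth[OF deformation_trilin[OF D]]
  ext2_nth_series_left[OF deformation_bilin[OF D]] ext2_nth_series_right[OF deformation_bilin[OF D]]
  ext3_nth_series_first[OF deformation_trilin[OF D]] ext3_nth_series_middle[OF deformation_trilin[OF D]]
  ext3_nth_series_last[OF deformation_trilin[OF D]] ext_map_const[OF hlya_lin[OF hl]]
  null_upto_sum_Suc[OF null] fps_add_nth ext_map_nth

lemma deformation_leading_cochains: "HomC2 s a (F (Suc n))" "HomC3 s a (G (Suc n))"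
proof -
  note H = deformation_hlya[OF D]
  let ?N = "Suc n" and ?c = "fps_const :: 'v \<Rightarrow> 'v fps"
  show "HomC2 s a (F ?N)"
    unfolding HomC2_def
  proof (intro conjI allI deformation_bilin[OF D])
    fix x y
    show "F ?N x x = 0" using arg_cong[OF hlya_bracket_alt[OF H, of "?c x"], of "\<lambda>p. p $ ?N"]
      by (simp add: leading_coeff_simps del: sum.atMost_Suc)
    show "F ?N (a x) (a y) = a (F ?N x y)"
      using arg_cong[OF hlya_twist_bracket[OF H, of "?c x" "?c y"], of "\<lambda>p. p $ ?N"]
      by (simp add: leading_coeff_simps del: sum.atMost_Suc)
  qed
  show "HomC3 s a (G ?N)"
    unfolding HomC3_def
  proof (intro conjI allI deformation_trilin[OF D])
    fix x y z
    show "G ?N x x z = 0" using arg_cong[OF hlya_triple_alt[OF H, of "?c x" "?c z"], of "\<lambda>p. p $ ?N"]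
      by (simp add: leading_coeff_simps del: sum.atMost_Suc)
    show "G ?N (a x) (a y) (a z) = a (G ?N x y z)"
      using arg_cong[OF hlya_twist_triple[OF H, of "?c x" "?c y" "?c z"], of "\<lambda>p. p $ ?N"]
      by (simp add: leading_coeff_simps del: sum.atMost_Suc)
  qed
qed

lemma deformation_leading_cocycle: "HomZ23 s b T a (F (Suc n)) (G (Suc n))"
proof -
  note H = deformation_hlya[OF D]
  let ?N = "Suc n" and ?c = "fps_const :: 'v \<Rightarrow> 'v fps"
  have "deltaI2 b T a (F ?N) (G ?N) x y z u = 0" for x y z u
    using arg_cong[OF hlya_triple_bracket[OF H, of "?c x" "?c y" "?c z" "?c u"], of "\<lambda>p. p $ ?N"]
    unfolding deltaI2_def by (simp add: leading_coeff_simps algebra_simps del: sum.atMost_Suc)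
  moreover have "deltaII2 T a (G ?N) x y u v w = 0" for x y u v w
    using arg_cong[OF hlya_triple_triple[OF H, of "?c x" "?c y" "?c u" "?c v" "?c w"],
        of "\<lambda>p. p $ ?N"]
    unfolding deltaII2_def by (simp add: leading_coeff_simps algebra_simps del: sum.atMost_Suc)
  moreover have "dI2 b a (F ?N) (G ?N) x y z = 0" for x y z
    using arg_cong[OF hlya_jacobi[OF H, of "?c x" "?c y" "?c z"], of "\<lambda>p. p $ ?N"]
    unfolding dI2_def by (simp add: leading_coeff_simps algebra_simps del: sum.atMost_Suc)
  moreover have "dII2 b T a (F ?N) (G ?N) x y z u = 0" for x y z u
    using arg_cong[OF hlya_triple_cyclic[OF H, of "?c x" "?c y" "?c z" "?c u"], of "\<lambda>p. p $ ?N"]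
    unfolding dII2_def by (simp add: leading_coeff_simps algebra_simps del: sum.atMost_Suc)
  ultimately show ?thesis
    unfolding HomZ23_def using deformation_leading_cochains by blast
qed

end

lemma ext2_nth_null_upto:
  assumes D: "deformation s b T a F G" and null: "null_upto n F G"
    and x: "\<And>j. 0 < j \<Longrightarrow> j \<le> n \<Longrightarrow> x $ j = 0" and y: "\<And>j. 0 < j \<Longrightarrow> j \<le> n \<Longrightarrow> y $ j = 0"
  shows ext2_nth_null_upto_low: "m \<le> n \<Longrightarrow> ext2 F x y $ m = (if m = 0 then b (x $ 0) (y $ 0) else 0)"
    and ext2_nth_null_upto_next: "ext2 F x y $ Suc n
      = F (Suc n) (x $ 0) (y $ 0) + b (x $ Suc n) (y $ 0) + b (x $ 0) (y $ Suc n)"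
proof -
  have vanish: "F i (x $ j) (y $ k) = 0" if "(0 < i \<and> i \<le> n) \<or> (0 < j \<and> j \<le> n) \<or> (0 < k \<and> k \<le> n)" for i j k
    using that null x y bilin_zero[OF deformation_bilin[OF D]] by (auto simp: null_upto_def)
  show "m \<le> n \<Longrightarrow> ext2 F x y $ m = (if m = 0 then b (x $ 0) (y $ 0) else 0)"
    unfolding ext2_nth_triples
    by (subst sum_triples_sparse_low[where n=n]) (auto intro: vanish simp: deformation_br0[OF D])
  show "ext2 F x y $ Suc n = F (Suc n) (x $ 0) (y $ 0) + b (x $ Suc n) (y $ 0) + b (x $ 0) (y $ Suc n)"
    unfolding ext2_nth_triples
    by (subst sum_triples_sparse_next[where n=n]) (auto intro: vanish simp: deformation_br0[OF D])
qed

lemma ext3_nth_null_upto: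
  assumes D: "deformation s b T a F G" and null: "null_upto n F G"
    and x: "\<And>j. 0 < j \<Longrightarrow> j \<le> n \<Longrightarrow> x $ j = 0" and y: "\<And>j. 0 < j \<Longrightarrow> j \<le> n \<Longrightarrow> y $ j = 0"
    and z: "\<And>j. 0 < j \<Longrightarrow> j \<le> n \<Longrightarrow> z $ j = 0"
  shows ext3_nth_null_upto_low:
      "m \<le> n \<Longrightarrow> ext3 G x y z $ m = (if m = 0 then T (x $ 0) (y $ 0) (z $ 0) else 0)"
    and ext3_nth_null_upto_next: "ext3 G x y z $ Suc n = G (Suc n) (x $ 0) (y $ 0) (z $ 0)
      + T (x $ Suc n) (y $ 0) (z $ 0) + T (x $ 0) (y $ Suc n) (z $ 0) + T (x $ 0) (y $ 0) (z $ Suc n)"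
proof -
  have vanish: "G i (x $ j) (y $ k) (z $ l) = 0"
    if "(0 < i \<and> i \<le> n) \<or> (0 < j \<and> j \<le> n) \<or> (0 < k \<and> k \<le> n) \<or> (0 < l \<and> l \<le> n)" for i j k l
    using that null x y z trilin_zero[OF deformation_trilin[OF D]] by (auto simp: null_upto_def)
  show "m \<le> n \<Longrightarrow> ext3 G x y z $ m = (if m = 0 then T (x $ 0) (y $ 0) (z $ 0) else 0)"
    unfolding ext3_nth_quadruples
    by (subst sum_quadruples_sparse_low[where n=n]) (auto intro: vanish simp: deformation_tr0[OF D])
  show "ext3 G x y z $ Suc n = G (Suc n) (x $ 0) (y $ 0) (z $ 0)
      + T (x $ Suc n) (y $ 0) (z $ 0) + T (x $ 0) (y $ Suc n) (z $ 0) + T (x $ 0) (y $ 0) (z $ Suc n)"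
    unfolding ext3_nth_quadruples
    by (subst sum_quadruples_sparse_next[where n=n]) (auto intro: vanish simp: deformation_tr0[OF D])
qed

definition elementary_gauge :: "nat \<Rightarrow> ('v \<Rightarrow> 'v) \<Rightarrow> nat \<Rightarrow> 'v \<Rightarrow> 'v::zero" where
  "elementary_gauge n h k = (if k = 0 then id else if k = Suc n then h else (\<lambda>_. 0))"

lemma ext1_elementary_gauge_nth:
  "ext1 (elementary_gauge n h) x $ m
    = x $ m + (if Suc n \<le> m then h (x $ (m - Suc n)) else (0::'v::comm_monoid_add))"
proof -
  have "ext1 (elementary_gauge n h) x $ m
      = (\<Sum>i\<in>(if Suc n \<le> m then {0, Suc n} else {0}). elementary_gauge n h i (x $ (m - i)))"
    unfolding ext1_nth by (rule sum.mono_neutral_right) (auto simp: elementary_gauge_def)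
  then show ?thesis by (simp add: elementary_gauge_def)
qed

lemma gauge_elementary_gauge:
  "module s \<Longrightarrow> lin s a \<Longrightarrow> HomC1 s a h \<Longrightarrow> gauge s a (elementary_gauge n h)"
  by (simp add: gauge_def HomC1_def elementary_gauge_def lin_def lin_zero[of s a]
      module.scale_zero_right)

lemma coeff_comp_elementary_gauge_low:
  "k \<le> n \<Longrightarrow> coeff_comp (elementary_gauge n h) P k = P k"
  by (intro ext) (simp add: coeff_comp_def sum_atMost_eq_first elementary_gauge_def)

lemma inv_ext1_elementary_gauge_const:
  fixes h :: "'v::ab_group_add \<Rightarrow> 'v" and n :: nat and u :: 'v
  defines "q \<equiv> inv (ext1 (elementary_gauge n h)) (fps_const u)"
  shows "q $ 0 = u" and "0 < m \<Longrightarrow> m \<le> n \<Longrightarrow> q $ m = 0" and "q $ Suc n = - h u"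
proof -
  have "bij (ext1 (elementary_gauge n h))"
    by (rule ext1_bij) (simp add: elementary_gauge_def)
  then have "ext1 (elementary_gauge n h) q = fps_const u"
    unfolding q_def by (simp add: bij_is_surj surj_f_inv_f)
  then have q: "q $ m + (if Suc n \<le> m then h (q $ (m - Suc n)) else 0) = fps_const u $ m" for m
    by (metis ext1_elementary_gauge_nth)
  show "q $ 0 = u" using q[of 0] by simp
  show "0 < m \<Longrightarrow> m \<le> n \<Longrightarrow> q $ m = 0" using q[of m] by simp
  show "q $ Suc n = - h u" using q[of "Suc n"] \<open>q $ 0 = u\<close> by (simp add: eq_neg_iff_add_eq_0)
qed

text \<open>Conjugation by \<open>1 + t^(n+1) h\<close> leaves the orders below \<open>n+1\<close> alone and subtracts
  \<open>(\<delta>\<^sub>I h, \<delta>\<^sub>I\<^sub>I h)\<close> in order \<open>n+1\<close>.\<close>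

lemma null_upto_conj_elementary_gauge:
  assumes D: "deformation s b T a F G" and null: "null_upto n F G"
    and f: "F (Suc n) = deltaI1 b h" and g: "G (Suc n) = deltaII1 T h"
  shows "null_upto (Suc n) (conj_br (elementary_gauge n h) F) (conj_tr (elementary_gauge n h) G)"
  unfolding null_upto_def
proof (intro allI impI conjI ext)
  fix k u v w assume k: "0 < k \<and> k \<le> Suc n"
  define q where "q u = inv (ext1 (elementary_gauge n h)) (fps_const u)" for u
  note q = inv_ext1_elementary_gauge_const[where h=h and n=n, folded q_def]
  have b: "bilin s b" using deformation_bilin[OF D, of 0] by (simp add: deformation_br0[OF D])
  have T: "trilin s T" using deformation_trilin[OF D, of 0] by (simp add: deformation_tr0[OF D])
  note lin_minus[OF bilin_lin1[OF b]] lin_minus[OF bilin_lin2[OF b]]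
    lin_minus[OF trilin_lin1[OF T]] lin_minus[OF trilin_lin2[OF T]] lin_minus[OF trilin_lin3[OF T]]
  note simps = this ext2_nth_null_upto[OF D null] ext3_nth_null_upto[OF D null] q f g
    deltaI1_def deltaII1_def ext1_elementary_gauge_nth
  show "conj_br (elementary_gauge n h) F k u v = 0"
    using k unfolding conj_br_def q_def[symmetric]
    by (cases "k = Suc n") (simp_all add: simps)
  show "conj_tr (elementary_gauge n h) G k u v w = 0"
    using k unfolding conj_tr_def q_def[symmetric]
    by (cases "k = Suc n") (simp_all add: simps)
qed

definition normalized_upto :: "('k::field \<Rightarrow> 'v \<Rightarrow> 'v) \<Rightarrow> ('v \<Rightarrow> 'v \<Rightarrow> 'v) \<Rightarrow> ('v \<Rightarrow> 'v \<Rightarrow> 'v \<Rightarrow> 'v)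
     \<Rightarrow> ('v \<Rightarrow> 'v) \<Rightarrow> (nat \<Rightarrow> 'v \<Rightarrow> 'v \<Rightarrow> 'v) \<Rightarrow> (nat \<Rightarrow> 'v \<Rightarrow> 'v \<Rightarrow> 'v \<Rightarrow> 'v) \<Rightarrow> nat
     \<Rightarrow> (nat \<Rightarrow> 'v \<Rightarrow> 'v) \<times> (nat \<Rightarrow> 'v \<Rightarrow> 'v \<Rightarrow> 'v) \<times> (nat \<Rightarrow> 'v \<Rightarrow> 'v \<Rightarrow> 'v \<Rightarrow> 'v::ab_group_add)
     \<Rightarrow> bool" where
  "normalized_upto s b T a F G n = (\<lambda>(P, F', G'). gauge s a P \<and> deformation s b T a F' G'
     \<and> null_upto n F' G' \<and> intertwines P F G F' G')"

lemma normalized_upto_Suc: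
  fixes s :: "'k::field \<Rightarrow> 'v::ab_group_add \<Rightarrow> 'v"
  assumes hl: "hlya s b T a" and H0: "HomH23_zero s b T a"
    and N: "normalized_upto s b T a F G n (P, F', G')"
  shows "\<exists>P2 F2 G2. normalized_upto s b T a F G (Suc n) (P2, F2, G2) \<and> (\<forall>k\<le>n. P2 k = P k)"
proof -
  note s = hlya_module[OF hl] and a = hlya_lin[OF hl]
  have P: "gauge s a P" and D: "deformation s b T a F' G'" and null: "null_upto n F' G'"
    and PF: "intertwines P F G F' G'"
    using N by (simp_all add: normalized_upto_def)
  obtain h where h: "HomC1 s a h" and f: "F' (Suc n) = deltaI1 b h" and g: "G' (Suc n) = deltaII1 T h"
    using deformation_leading_cocycle[OF hl D null] H0 unfolding HomH23_zero_def HomB23_def by blast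
  define E where "E = elementary_gauge n h"
  have E: "gauge s a E" unfolding E_def by (rule gauge_elementary_gauge[OF s a h])
  note conj = conj_deformation[OF s a D E]
  have "normalized_upto s b T a F G (Suc n) (coeff_comp E P, conj_br E F', conj_tr E G')"
    unfolding normalized_upto_def prod.case
    using gauge_coeff_comp[OF s a E P] conj intertwines_coeff_comp[OF gauge_lin[OF E] PF conj(2)]
      null_upto_conj_elementary_gauge[OF D null f g]
    by (simp add: E_def)
  moreover have "\<forall>k\<le>n. coeff_comp E P k = P k"
    by (simp add: E_def coeff_comp_elementary_gauge_low)
  ultimately show ?thesis by blast
qed

lemma normalizing_gauges_exist:
  fixes s :: "'k::field \<Rightarrow> 'v::ab_group_add \<Rightarrow> 'v"
  assumes hl: "hlya s b T a" and H0: "HomH23_zero s b T a" and D: "deformation s b T a F G"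
  shows "\<exists>Q F' G'. \<forall>n. normalized_upto s b T a F G n (Q n, F' n, G' n)
    \<and> (\<forall>k\<le>n. Q (Suc n) k = Q n k)"
proof -
  have "normalized_upto s b T a F G 0 (id_gauge, F, G)"
    using gauge_id_gauge[OF hlya_module[OF hl] hlya_lin[OF hl]] D intertwines_id_gauge
    by (simp add: normalized_upto_def null_upto_def)
  then obtain f where "\<forall>n. normalized_upto s b T a F G n (f n)
      \<and> (\<forall>k\<le>n. fst (f (Suc n)) k = fst (f n) k)"
  proof (atomize_elim, intro dependent_nat_choice)
    fix x n assume "normalized_upto s b T a F G n x"
    moreover obtain P F' G' where "x = (P, F', G')" by (cases x)
    ultimately show "\<exists>y. normalized_upto s b T a F G (Suc n) y \<and> (\<forall>k\<le>n. fst y k = fst x k)"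
      using normalized_upto_Suc[OF hl H0] by fastforce
  qed blast
  then show ?thesis
    by (intro exI[of _ "\<lambda>n. fst (f n)"] exI[of _ "\<lambda>n. fst (snd (f n))"] exI[of _ "\<lambda>n. snd (snd (f n))"])
       simp
qed

section \<open>Passing to the limit\<close>

lemma null_upto_eq_null:
  assumes "null_upto n F G" "F 0 = b" "G 0 = T" "i \<le> n"
  shows "F i = null_br b i" and "G i = null_tr T i"
  using assms by (cases "i = 0"; auto simp: null_upto_def null_br_def null_tr_def)+

text \<open>The coefficient of \<open>t^m\<close> of an intertwining relation involves only the first \<open>m+1\<close>
  coefficients of the gauge and of the deformations, and these have stabilised by stage \<open>m\<close>.\<close>

lemma intertwines_null_limit:
  assumes PF: "\<And>n. intertwines (Q n) F G (F' n) (G' n)"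
    and D: "\<And>n. deformation s b T a (F' n) (G' n)" and null: "\<And>n. null_upto n (F' n) (G' n)"
    and stable: "\<And>n k. k \<le> n \<Longrightarrow> Q (Suc n) k = Q n k"
  shows "intertwines (\<lambda>k. Q k k) F G (null_br b) (null_tr T)"
proof -
  have Q: "Q m k = Q k k" if "k \<le> m" for k m
    using that by (induction m rule: dec_induct) (simp_all add: stable)
  define P where "P = (\<lambda>k. Q k k)"
  have ext1_Q: "ext1 (Q m) x $ j = ext1 P x $ j" if "j \<le> m" for x j m
    using that by (intro ext1_cong_nth) (auto simp: P_def intro!: Q)
  note null_eq = null_upto_eq_null[OF null deformation_br0[OF D] deformation_tr0[OF D]]
  show ?thesis
    unfolding intertwines_def P_def[symmetric]
  proof (intro allI conjI; rule fps_ext)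
    fix x y z m
    have "ext1 P (ext2 F x y) $ m = ext1 (Q m) (ext2 F x y) $ m"
      by (simp add: ext1_Q)
    also have "\<dots> = ext2 (F' m) (ext1 (Q m) x) (ext1 (Q m) y) $ m"
      using PF[of m] by (simp add: intertwines_def)
    also have "\<dots> = ext2 (null_br b) (ext1 P x) (ext1 P y) $ m"
      by (rule ext2_cong_nth) (simp_all add: null_eq ext1_Q)
    finally show "ext1 P (ext2 F x y) $ m = ext2 (null_br b) (ext1 P x) (ext1 P y) $ m" .
    have "ext1 P (ext3 G x y z) $ m = ext1 (Q m) (ext3 G x y z) $ m"
      by (simp add: ext1_Q)
    also have "\<dots> = ext3 (G' m) (ext1 (Q m) x) (ext1 (Q m) y) (ext1 (Q m) z) $ m"
      using PF[of m] by (simp add: intertwines_def)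
    also have "\<dots> = ext3 (null_tr T) (ext1 P x) (ext1 P y) (ext1 P z) $ m"
      by (rule ext3_cong_nth) (simp_all add: null_eq ext1_Q)
    finally show "ext1 P (ext3 G x y z) $ m = ext3 (null_tr T) (ext1 P x) (ext1 P y) (ext1 P z) $ m" .
  qed
qed

theorem mainTheorem5:
  fixes s :: "'k::field \<Rightarrow> 'v::ab_group_add \<Rightarrow> 'v"
    and b :: "'v \<Rightarrow> 'v \<Rightarrow> 'v"
    and T :: "'v \<Rightarrow> 'v \<Rightarrow> 'v \<Rightarrow> 'v"
    and a :: "'v \<Rightarrow> 'v"
  assumes "hlya s b T a"
    and "HomH23_zero s b T a"
  shows "analytically_rigid s b T a"
  unfolding analytically_rigid_def
proof (intro allI impI)
  fix F G assume "deformation s b T a F G"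
  then obtain Q F' G' where N: "\<And>n. normalized_upto s b T a F G n (Q n, F' n, G' n)"
    and stable: "\<And>n k. k \<le> n \<Longrightarrow> Q (Suc n) k = Q n k"
    using normalizing_gauges_exist[OF assms] by blast
  have "gauge s a (\<lambda>k. Q k k)"
    using N by (simp add: normalized_upto_def gauge_def)
  moreover have "intertwines (\<lambda>k. Q k k) F G (null_br b) (null_tr T)"
    by (rule intertwines_null_limit[where Q=Q and F'=F' and G'=G' and s=s and a=a, OF _ _ _ stable])
       (use N in \<open>simp_all add: normalized_upto_def\<close>)
  ultimately show "equivalent_deformations s a F G (null_br b) (null_tr T)"
    by (rule gauge_intertwines_equivalent[OF hlya_module[OF assms(1)] hlya_lin[OF assms(1)]])
qed

end
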